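(* Let $(n_i)_{i\ge1}$ be positive integers with $n_i\mid n_j$ for all $i\le j$ and $n_j\to\infty$, let $X=\varprojlim \mathbb{Z}/n_i\mathbb{Z}$ and let $T:X\to X$ be the odometer map $T((x_i+n_i\mathbb{Z})_i)=(x_i+1+n_i\mathbb{Z})_i$. Let $p$ be a prime. Then the following are equivalent: (1) for every continuous map $f:X\to\mathbb{Z}/p\mathbb{Z}$ there is a continuous map $L:X\to\mathbb{Z}/p\mathbb{Z}$ with $f(x)=L(Tx)-L(x)$ for all $x\in X$ (i.e. the cocycle determined by $c(1,x)=f(x)$ is a coboundary); (2) $\sup_i \operatorname{ord}(p,n_i)=\infty$, where $\operatorname{ord}(p,n)=\max\{k\ge 0: p^k\mid n\}$.
   Context: $\varprojlim \mathbb{Z}/n_i\mathbb{Z}=\{(x_i+n_i\mathbb{Z})_{i\ge1}\in\prod_i\mathbb{Z}/n_i\mathbb{Z}: n_i\mid (x_{i+1}-x_i)\ \forall i\}$ with the product topology. *)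

theory Defs
  imports "HOL-Analysis.Analysis" "HOL-Computational_Algebra.Primes"
begin

text \<open>Indices are shifted to start at 0: n 0, n 1, ... stands for n_1, n_2, ...
  An element x_i + n_i Z of Z/n_iZ is represented by its least nonnegative
  residue x i in {..<n i}.\<close>

definition odometer_space :: "(nat \<Rightarrow> nat) \<Rightarrow> (nat \<Rightarrow> nat) set" where
  "odometer_space n =
     {x. (\<forall>i. x i < n i) \<and> (\<forall>i. int (n i) dvd int (x (Suc i)) - int (x i))}"

definition odometer_topology :: "(nat \<Rightarrow> nat) \<Rightarrow> (nat \<Rightarrow> nat) topology" where
  "odometer_topology n =
     subtopology (product_topology (\<lambda>i. discrete_topology {..<n i}) UNIV) (odometer_space n)"

definition odometer :: "(nat \<Rightarrow> nat) \<Rightarrow> (nat \<Rightarrow> nat) \<Rightarrow> (nat \<Rightarrow> nat)" where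
  "odometer n x = (\<lambda>i. (x i + 1) mod n i)"

text \<open>Z/pZ is represented as {0..<p} (integers) with the discrete topology.\<close>
definition Zmod_topology :: "nat \<Rightarrow> int topology" where
  "Zmod_topology p = discrete_topology {0..<int p}"

end

theory Submission
  imports Defs
begin

(* X is compact and totally disconnected, so a continuous map from X to a discrete space depends
   only on one coordinate x_m.  If f = L o T - L with L depending on x_m, then the sum of f along
   the orbit segment 0, T 0, ..., T^(n_M - 1) 0 telescopes to 0 mod p for all M >= m.  For the
   indicator of {x_k = 0} that sum is n_M / n_k, which is prime to p once ord(p, n_k) is maximal.
   Conversely, if f depends on x_m and p n_m divides n_M, the partial sums of f along the orbit of 0
   are n_M-periodic mod p, so L x = sum_{j < x_M} f (T^j 0) mod p is a continuous transfer function. *)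

lemma sum_lessThan_add:
  fixes a b :: nat
  shows "(\<Sum>j<a + b. h j) = (\<Sum>j<a. h j) + (\<Sum>j<b. h (a + j))"
  by (induction b) (simp_all add: add_ac)

lemma sum_lessThan_periodic:
  fixes h :: "nat \<Rightarrow> 'a::comm_semiring_1"
  assumes periodic: "\<And>j. h (j mod P) = h j"
  shows "(\<Sum>j<N. h j) = of_nat (N div P) * (\<Sum>j<P. h j) + (\<Sum>j<N mod P. h j)"
proof -
  have shift: "h (q * P + j) = h j" for q j
    by (metis periodic mod_mult_self3)
  have full_periods: "(\<Sum>j<q * P. h j) = of_nat q * (\<Sum>j<P. h j)" for q
  proof (induction q)
    case (Suc q)
    have "(\<Sum>j<Suc q * P. h j) = (\<Sum>j<q * P. h j) + (\<Sum>j<P. h (q * P + j))"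
      by (simp only: mult_Suc add.commute[of P] sum_lessThan_add)
    with Suc.IH show ?case
      by (simp add: shift, simp add: algebra_simps)
  qed simp
  have "(\<Sum>j<N. h j) = (\<Sum>j<N div P * P + N mod P. h j)"
    by simp
  also have "\<dots> = of_nat (N div P) * (\<Sum>j<P. h j) + (\<Sum>j<N mod P. h j)"
    by (simp only: sum_lessThan_add shift full_periods)
  finally show ?thesis .
qed

lemma sum_lessThan_mod_period:
  fixes h :: "nat \<Rightarrow> int"
  assumes periodic: "\<And>j. h (j mod P) = h j" and "d dvd (\<Sum>j<P. h j)"
  shows "(\<Sum>j<N mod P. h j) mod d = (\<Sum>j<N. h j) mod d"
proof -
  obtain c where "(\<Sum>j<P. h j) = d * c"
    using \<open>d dvd _\<close> by blast
  then have "(\<Sum>j<N. h j) = (\<Sum>j<N mod P. h j) + d * (int (N div P) * c)"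
    using sum_lessThan_periodic[of h P N, OF periodic] by simp
  then show ?thesis
    by simp
qed

lemma prime_mult_dvd_iff_multiplicity_less:
  fixes p a b :: nat
  assumes "prime p" and "a dvd b" and "b > 0"
  shows "p * a dvd b \<longleftrightarrow> multiplicity p a < multiplicity p b"
proof -
  obtain q where b: "b = a * q"
    using \<open>a dvd b\<close> by blast
  with \<open>b > 0\<close> have "a > 0" "q > 0"
    by simp_all
  have "p * a dvd b \<longleftrightarrow> p dvd q"
    using \<open>a > 0\<close> by (simp add: b mult.commute[of p])
  also have "\<dots> \<longleftrightarrow> multiplicity p q > 0"
    using assms(1) \<open>q > 0\<close> by (simp add: prime_multiplicity_gt_zero_iff)
  also have "\<dots> \<longleftrightarrow> multiplicity p a < multiplicity p b"
    using assms(1) \<open>a > 0\<close> \<open>q > 0\<close> by (simp add: b prime_elem_multiplicity_mult_distrib)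
  finally show ?thesis .
qed

lemma topspace_odometer_topology [simp]:
  "topspace (odometer_topology n) = odometer_space n"
  unfolding odometer_topology_def odometer_space_def
  by (auto simp: PiE_def extensional_def)

lemma continuous_map_product_coord:
  "continuous_map (product_topology (\<lambda>i. discrete_topology {..<n i}) UNIV)
     (discrete_topology {..<n m}) (\<lambda>x. x m)"
  by (rule continuous_map_product_projection) simp

lemma continuous_map_odometer_coord:
  "continuous_map (odometer_topology n) (discrete_topology {..<n m}) (\<lambda>x. x m)"
  unfolding odometer_topology_def
  by (rule continuous_map_from_subtopology) (rule continuous_map_product_coord)

lemma continuous_map_odometer_through_coord:
  assumes "g \<in> {..<n m} \<rightarrow> S"
  shows "continuous_map (odometer_topology n) (discrete_topology S) (\<lambda>x. g (x m))"
proof -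
  have "continuous_map (discrete_topology {..<n m}) (discrete_topology S) g"
    using assms by simp
  from continuous_map_compose[OF continuous_map_odometer_coord[of n m] this] show ?thesis
    by (simp add: o_def)
qed

lemma openin_odometer_cylinder:
  "openin (odometer_topology n) {y \<in> odometer_space n. y m = a}"
proof -
  have "openin (odometer_topology n) {y \<in> topspace (odometer_topology n). y m \<in> {a} \<inter> {..<n m}}"
    by (rule openin_continuous_map_preimage[OF continuous_map_odometer_coord]) simp
  moreover have "{y \<in> topspace (odometer_topology n). y m \<in> {a} \<inter> {..<n m}} =
      {y \<in> odometer_space n. y m = a}"
    by (auto simp: odometer_space_def)
  ultimately show ?thesis
    by simp
qed

lemma compact_space_odometer_topology: "compact_space (odometer_topology n)"
proof -
  let ?P = "product_topology (\<lambda>i. discrete_topology {..<n i}) UNIV"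
  define R where "R i = {(a, b). a < n i \<and> b < n (Suc i) \<and> int (n i) dvd int b - int a}" for i
  have "continuous_map ?P (discrete_topology ({..<n i} \<times> {..<n (Suc i)})) (\<lambda>x. (x i, x (Suc i)))" for i
    using continuous_map_paired[THEN iffD2, OF conjI,
        OF continuous_map_product_coord continuous_map_product_coord]
    by (simp add: prod_topology_discrete_topology)
  then have closed: "closedin ?P {x \<in> topspace ?P. (x i, x (Suc i)) \<in> R i}" for i
    by (rule closedin_continuous_map_preimage) (auto simp: R_def)
  have "odometer_space n = (\<Inter>i. {x \<in> topspace ?P. (x i, x (Suc i)) \<in> R i})"
    by (auto simp: odometer_space_def R_def PiE_UNIV_domain)
  then have "closedin ?P (odometer_space n)"
    using closed by auto
  then have "compactin ?P (odometer_space n)"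
    by (rule closedin_compact_space[rotated])
       (simp add: compact_space_product_topology compact_space_discrete_topology)
  then show ?thesis
    unfolding odometer_topology_def by (rule compact_space_subtopology)
qed

definition nat_to_odometer :: "(nat \<Rightarrow> nat) \<Rightarrow> nat \<Rightarrow> nat \<Rightarrow> nat" where
  "nat_to_odometer n a = (\<lambda>i. a mod n i)"

lemma odometer_nat_to_odometer: "odometer n (nat_to_odometer n a) = nat_to_odometer n (Suc a)"
  by (simp add: odometer_def nat_to_odometer_def mod_Suc_eq)

definition depends_on_coord :: "(nat \<Rightarrow> nat) \<Rightarrow> nat \<Rightarrow> ((nat \<Rightarrow> nat) \<Rightarrow> 'a) \<Rightarrow> bool" where
  "depends_on_coord n m g \<longleftrightarrow>
     (\<forall>x\<in>odometer_space n. \<forall>y\<in>odometer_space n. x m = y m \<longrightarrow> g x = g y)"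

definition odometer_coboundary :: "(nat \<Rightarrow> nat) \<Rightarrow> nat \<Rightarrow> ((nat \<Rightarrow> nat) \<Rightarrow> int) \<Rightarrow> bool" where
  "odometer_coboundary n p f \<longleftrightarrow>
     (\<exists>L. continuous_map (odometer_topology n) (Zmod_topology p) L \<and>
          (\<forall>x\<in>odometer_space n. f x = (L (odometer n x) - L x) mod int p))"

locale divisibility_chain =
  fixes n :: "nat \<Rightarrow> nat"
  assumes n_pos: "\<And>i. n i > 0"
    and n_dvd_mono: "\<And>i j. i \<le> j \<Longrightarrow> n i dvd n j"
begin

lemma nat_to_odometer_in_odometer_space: "nat_to_odometer n a \<in> odometer_space n"
proof -
  have "int (n i) dvd int (a mod n (Suc i)) - int (a mod n i)" for i
    unfolding mod_eq_dvd_iff[symmetric]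
    using n_dvd_mono[of i "Suc i"] by (simp flip: of_nat_mod add: mod_mod_cancel)
  then show ?thesis
    using n_pos by (simp add: odometer_space_def nat_to_odometer_def mod_eq_dvd_iff)
qed

lemma odometer_space_coord_Suc_mod:
  assumes "x \<in> odometer_space n"
  shows "x i = x (Suc i) mod n i"
proof -
  have "int (n i) dvd int (x (Suc i)) - int (x i)" and "x i < n i"
    using assms by (simp_all add: odometer_space_def)
  then have "int (x (Suc i)) mod int (n i) = int (x i) mod int (n i)"
    by (simp only: mod_eq_dvd_iff)
  with \<open>x i < n i\<close> show ?thesis
    by (metis of_nat_eq_iff of_nat_mod mod_less)
qed

lemma odometer_space_coord_mod:
  assumes "x \<in> odometer_space n" and "i \<le> m"
  shows "x i = x m mod n i"
  using \<open>i \<le> m\<close>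
proof (induction m rule: dec_induct)
  case base
  show ?case
    using assms(1) by (simp add: odometer_space_def)
next
  case (step k)
  then show ?case
    using odometer_space_coord_Suc_mod[OF assms(1), of k] n_dvd_mono[of i k]
    by (simp add: mod_mod_cancel)
qed

lemma odometer_space_coord_eq_below:
  assumes "x \<in> odometer_space n" "y \<in> odometer_space n" "x m = y m" "i \<le> m"
  shows "x i = y i"
  using odometer_space_coord_mod[OF assms(1,4)] odometer_space_coord_mod[OF assms(2,4)] assms(3)
  by simp

lemma odometer_cylinder_subset_openin:
  assumes "openin (odometer_topology n) U" and "x \<in> U"
  obtains m where "{y \<in> odometer_space n. y m = x m} \<subseteq> U"
proof -
  obtain T where T: "openin (product_topology (\<lambda>i. discrete_topology {..<n i}) UNIV) T"
    and U: "U = T \<inter> odometer_space n"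
    using assms(1) unfolding odometer_topology_def openin_subtopology by blast
  have x: "x \<in> odometer_space n"
    using \<open>x \<in> U\<close> U by blast
  obtain V where fin: "finite {i. V i \<noteq> {..<n i}}"
    and "x \<in> Pi\<^sub>E UNIV V" and VT: "Pi\<^sub>E UNIV V \<subseteq> T"
    using T \<open>x \<in> U\<close> U unfolding openin_product_topology_alt by auto
  define m where "m = Max (insert 0 {i. V i \<noteq> {..<n i}})"
  have "y \<in> U" if y: "y \<in> odometer_space n" and "y m = x m" for y
  proof -
    have "y i \<in> V i" for i
    proof (cases "V i = {..<n i}")
      case True
      then show ?thesis
        using y by (simp add: odometer_space_def)
    next
      case False
      then have "i \<le> m"
        using fin by (simp add: m_def)
      then have "y i = x i"
        by (rule odometer_space_coord_eq_below[OF y x \<open>y m = x m\<close>])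
      then show ?thesis
        using \<open>x \<in> Pi\<^sub>E UNIV V\<close> by auto
    qed
    then show ?thesis
      using VT y U by auto
  qed
  then show thesis
    using that by blast
qed

lemma continuous_map_discrete_constant_on_cylinder:
  assumes g: "continuous_map (odometer_topology n) (discrete_topology S) g"
    and x: "x \<in> odometer_space n"
  obtains m where "\<forall>y\<in>odometer_space n. y m = x m \<longrightarrow> g y = g x"
proof -
  have "g x \<in> S"
    using continuous_map_image_subset_topspace[OF g] x by auto
  then have "openin (odometer_topology n) {y \<in> topspace (odometer_topology n). g y \<in> {g x}}"
    by (intro openin_continuous_map_preimage[OF g]) simp
  moreover have "x \<in> {y \<in> topspace (odometer_topology n). g y \<in> {g x}}"
    using x by simp
  ultimately obtain m where "{y \<in> odometer_space n. y m = x m} \<subseteq>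
      {y \<in> topspace (odometer_topology n). g y \<in> {g x}}"
    by (rule odometer_cylinder_subset_openin)
  then show thesis
    by (intro that) auto
qed

lemma continuous_map_discrete_depends_on_coord:
  assumes g: "continuous_map (odometer_topology n) (discrete_topology S) g"
  obtains M where "depends_on_coord n M g"
proof -
  have "\<exists>m. \<forall>y\<in>odometer_space n. y m = x m \<longrightarrow> g y = g x" if x: "x \<in> odometer_space n" for x
    using continuous_map_discrete_constant_on_cylinder[OF g x] by blast
  then obtain m where m: "\<And>x y. x \<in> odometer_space n \<Longrightarrow> y \<in> odometer_space n \<Longrightarrow>
      y (m x) = x (m x) \<Longrightarrow> g y = g x"
    by metis
  define W where "W x = {y \<in> odometer_space n. y (m x) = x (m x)}" for x
  obtain F where "finite F" "F \<subseteq> odometer_space n" and cover: "odometer_space n \<subseteq> (\<Union>c\<in>F. W c)"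
  proof -
    have "\<exists>\<F>. finite \<F> \<and> \<F> \<subseteq> W ` odometer_space n \<and> odometer_space n \<subseteq> \<Union>\<F>"
      using compact_space_odometer_topology[of n, unfolded compact_space_def topspace_odometer_topology]
      by (rule compactinD) (auto simp: W_def openin_odometer_cylinder)
    then show thesis
      using that by (metis finite_subset_image)
  qed
  define M where "M = Max (insert 0 (m ` F))"
  have "depends_on_coord n M g"
    unfolding depends_on_coord_def
  proof (intro ballI impI)
    fix x y assume x: "x \<in> odometer_space n" and y: "y \<in> odometer_space n" and "x M = y M"
    obtain c where "c \<in> F" and "x \<in> W c"
      using cover x by blast
    then have "m c \<le> M"
      using \<open>finite F\<close> by (simp add: M_def)
    then have "y (m c) = x (m c)"
      using odometer_space_coord_eq_below[OF x y \<open>x M = y M\<close>] by simp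
    moreover have c: "c \<in> odometer_space n"
      using \<open>c \<in> F\<close> \<open>F \<subseteq> odometer_space n\<close> by blast
    ultimately show "g x = g y"
      using m[OF c x] m[OF c y] \<open>x \<in> W c\<close> by (simp add: W_def)
  qed
  then show thesis
    by (rule that)
qed

lemma depends_on_coord_nat_to_odometer_mod:
  assumes "depends_on_coord n m g" and "m \<le> k"
  shows "g (nat_to_odometer n (j mod n k)) = g (nat_to_odometer n j)"
proof -
  have "j mod n k mod n m = j mod n m"
    using n_dvd_mono[OF \<open>m \<le> k\<close>] by (simp add: mod_mod_cancel)
  then show ?thesis
    using assms(1) nat_to_odometer_in_odometer_space
    by (simp add: depends_on_coord_def nat_to_odometer_def)
qed

lemma coboundary_orbit_sums_dvd:
  fixes f L :: "(nat \<Rightarrow> nat) \<Rightarrow> int"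
  assumes L: "continuous_map (odometer_topology n) (discrete_topology S) L"
    and cob: "\<forall>x\<in>odometer_space n. f x = (L (odometer n x) - L x) mod int p"
  obtains m0 where "\<And>m. m0 \<le> m \<Longrightarrow> int p dvd (\<Sum>j<n m. f (nat_to_odometer n j))"
proof -
  obtain m0 where dep: "depends_on_coord n m0 L"
    using continuous_map_discrete_depends_on_coord[OF L] .
  have telescope: "(\<Sum>j<N. f (nat_to_odometer n j)) mod int p =
      (L (nat_to_odometer n N) - L (nat_to_odometer n 0)) mod int p" for N
  proof -
    have "(\<Sum>j<N. f (nat_to_odometer n j)) =
        (\<Sum>j<N. (L (nat_to_odometer n (Suc j)) - L (nat_to_odometer n j)) mod int p)"
      using cob nat_to_odometer_in_odometer_space by (simp add: odometer_nat_to_odometer)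
    then show ?thesis
      by (simp add: mod_sum_eq sum_lessThan_telescope[of "\<lambda>j. L (nat_to_odometer n j)"])
  qed
  have "int p dvd (\<Sum>j<n m. f (nat_to_odometer n j))" if "m0 \<le> m" for m
    using telescope[of "n m"] depends_on_coord_nat_to_odometer_mod[OF dep that, of "n m"]
    by (simp add: dvd_eq_mod_eq_0)
  then show thesis
    by (rule that)
qed

lemma orbit_sum_indicator_coord_zero:
  assumes "k \<le> m"
  shows "(\<Sum>j<n m. if nat_to_odometer n j k = 0 then 1 else 0 :: int) = int (n m div n k)"
proof -
  have "(\<Sum>j<n k. if j mod n k = 0 then 1 else 0 :: int) = (\<Sum>j<n k. if j = 0 then 1 else 0)"
    by (rule sum.cong) simp_all
  also have "\<dots> = 1"
    using n_pos[of k] by simp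
  finally show ?thesis
    using sum_lessThan_periodic[of "\<lambda>j. if j mod n k = 0 then 1 else 0 :: int" "n k" "n m"]
      n_dvd_mono[OF assms]
    by (simp add: nat_to_odometer_def)
qed

lemma coboundary_of_depends_on_coord:
  assumes f: "continuous_map (odometer_topology n) (Zmod_topology p) f"
    and dep: "depends_on_coord n m f" and "m \<le> M" and "p * n m dvd n M"
  shows "odometer_coboundary n p f"
proof -
  define h where "h j = f (nat_to_odometer n j)" for j
  define S where "S N = (\<Sum>j<N. h j)" for N
  have "p > 0"
    using n_pos[of M] \<open>p * n m dvd n M\<close> by (auto intro: gr0I)
  have h_mod: "h (j mod n k) = h j" if "m \<le> k" for j k
    unfolding h_def by (rule depends_on_coord_nat_to_odometer_mod[OF dep that])
  have "int p dvd S (n M)"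
  proof -
    have "p dvd n M div n m"
      using \<open>p * n m dvd n M\<close> n_pos[of m] n_dvd_mono[OF \<open>m \<le> M\<close>] by (simp add: dvd_div_iff_mult)
    moreover have "S (n M) = int (n M div n m) * S (n m)"
      using sum_lessThan_periodic[of h "n m" "n M", OF h_mod[OF order_refl]] n_dvd_mono[OF \<open>m \<le> M\<close>]
      by (simp add: S_def)
    ultimately show ?thesis
      by simp
  qed
  then have S_mod: "S (N mod n M) mod int p = S N mod int p" for N
    using sum_lessThan_mod_period[of h "n M" "int p" N] h_mod[OF \<open>m \<le> M\<close>] by (simp add: S_def)
  define L where "L x = S (x M) mod int p" for x :: "nat \<Rightarrow> nat"
  have "continuous_map (odometer_topology n) (Zmod_topology p) L"
    unfolding L_def Zmod_topology_def
    by (rule continuous_map_odometer_through_coord) (simp add: \<open>p > 0\<close>)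
  moreover have "f x = (L (odometer n x) - L x) mod int p" if x: "x \<in> odometer_space n" for x
  proof -
    have "x M < n M"
      using x by (simp add: odometer_space_def)
    then have "x m = nat_to_odometer n (x M) m"
      using odometer_space_coord_eq_below[OF x nat_to_odometer_in_odometer_space _ \<open>m \<le> M\<close>]
      by (simp add: nat_to_odometer_def)
    then have fx: "f x = h (x M)"
      using dep x nat_to_odometer_in_odometer_space unfolding depends_on_coord_def h_def by blast
    have "f x \<in> {0..<int p}"
      using continuous_map_image_subset_topspace[OF f] x by (auto simp: Zmod_topology_def)
    then have "f x = (S (Suc (x M)) - S (x M)) mod int p"
      by (simp add: fx S_def)
    also have "\<dots> = (S (Suc (x M) mod n M) mod int p - S (x M) mod int p) mod int p"
      by (simp add: S_mod mod_diff_eq)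
    also have "\<dots> = (L (odometer n x) - L x) mod int p"
      by (simp add: L_def odometer_def)
    finally show ?thesis .
  qed
  ultimately show ?thesis
    unfolding odometer_coboundary_def by blast
qed

lemma coboundaries_imp_multiplicity_unbounded:
  assumes "prime p"
    and coboundaries: "\<And>f. continuous_map (odometer_topology n) (Zmod_topology p) f \<Longrightarrow>
      odometer_coboundary n p f"
  shows "\<not> bdd_above (range (\<lambda>i. multiplicity p (n i)))"
proof
  assume "bdd_above (range (\<lambda>i. multiplicity p (n i)))"
  then have fin: "finite (range (\<lambda>i. multiplicity p (n i)))"
    by (simp add: bdd_above_nat)
  obtain k where "multiplicity p (n k) = Max (range (\<lambda>i. multiplicity p (n i)))"
    using Max_in[OF fin] by auto
  with fin have k_max: "multiplicity p (n i) \<le> multiplicity p (n k)" for i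
    by simp
  define f where "f x = (if x k = 0 then 1 else 0 :: int)" for x :: "nat \<Rightarrow> nat"
  have "continuous_map (odometer_topology n) (Zmod_topology p) f"
    unfolding f_def Zmod_topology_def
    by (rule continuous_map_odometer_through_coord) (use prime_gt_1_nat[OF \<open>prime p\<close>] in auto)
  then obtain L where L: "continuous_map (odometer_topology n) (Zmod_topology p) L"
    and cob: "\<forall>x\<in>odometer_space n. f x = (L (odometer n x) - L x) mod int p"
    using coboundaries unfolding odometer_coboundary_def by blast
  obtain m0 where "\<And>m. m0 \<le> m \<Longrightarrow> int p dvd (\<Sum>j<n m. f (nat_to_odometer n j))"
    using coboundary_orbit_sums_dvd[OF L[unfolded Zmod_topology_def] cob] by blast
  then have "int p dvd (\<Sum>j<n (max m0 k). f (nat_to_odometer n j))"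
    by simp
  then have "p dvd n (max m0 k) div n k"
    using orbit_sum_indicator_coord_zero[of k "max m0 k"] by (simp add: f_def)
  then have "p * n k dvd n (max m0 k)"
    using n_pos[of k] n_dvd_mono[of k "max m0 k"] by (simp add: dvd_div_iff_mult)
  with k_max[of "max m0 k"] show False
    using prime_mult_dvd_iff_multiplicity_less[OF \<open>prime p\<close> n_dvd_mono n_pos] by simp
qed

lemma multiplicity_unbounded_imp_coboundary:
  assumes "prime p" and unbounded: "\<not> bdd_above (range (\<lambda>i. multiplicity p (n i)))"
    and f: "continuous_map (odometer_topology n) (Zmod_topology p) f"
  shows "odometer_coboundary n p f"
proof -
  obtain m where dep: "depends_on_coord n m f"
    using f unfolding Zmod_topology_def by (rule continuous_map_discrete_depends_on_coord)
  from unbounded obtain M where "multiplicity p (n m) < multiplicity p (n M)"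
    by (auto simp: bdd_above_def not_le)
  also have "multiplicity p (n M) \<le> multiplicity p (n (max m M))"
    using dvd_imp_multiplicity_le[OF n_dvd_mono[OF max.cobounded2]] n_pos by simp
  finally have "p * n m dvd n (max m M)"
    using prime_mult_dvd_iff_multiplicity_less[OF \<open>prime p\<close> n_dvd_mono[of m "max m M"] n_pos]
    by simp
  then show ?thesis
    by (rule coboundary_of_depends_on_coord[OF f dep max.cobounded1])
qed

end

theorem proposition3p4:
  fixes n :: "nat \<Rightarrow> nat" and p :: nat
  assumes pos: "\<And>i. n i > 0"
    and dvd: "\<And>i j. i \<le> j \<Longrightarrow> n i dvd n j"
    and lim: "filterlim n at_top sequentially"
    and prime: "prime p"
  shows "(\<forall>f. continuous_map (odometer_topology n) (Zmod_topology p) f \<longrightarrow>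
            (\<exists>L. continuous_map (odometer_topology n) (Zmod_topology p) L \<and>
                 (\<forall>x\<in>odometer_space n. f x = (L (odometer n x) - L x) mod int p)))
         \<longleftrightarrow> \<not> bdd_above (range (\<lambda>i. multiplicity p (n i)))"
proof -
  interpret divisibility_chain n
    using pos dvd by unfold_locales
  show ?thesis
    unfolding odometer_coboundary_def[symmetric]
    using coboundaries_imp_multiplicity_unbounded[OF prime]
      multiplicity_unbounded_imp_coboundary[OF prime]
    by metis
qed

end
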